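(* Let $\mathcal{M}$ be a set of $m$ items with $m$ even, and let $v_1,v_2:2^{\mathcal{M}}\to\mathbb{R}$ be arbitrary valuation functions for $n=2$ agents. Let $\sigma_1,\sigma_2$ be independent uniformly random permutations of $\mathcal{M}$. Then, with probability at least $1-\frac{1}{m/2+1}$, an envy-free allocation exists for the renamed valuations $v_1^{\sigma_1},v_2^{\sigma_2}$. Moreover, this is tight up to constants: there exist additive valuation functions $v_1,v_2$ (for every $m\ge 2$) for which, with probability $1/m$, no envy-free allocation exists for $v_1^{\sigma_1},v_2^{\sigma_2}$.
   Context: For a valuation $v$ and a permutation $\sigma:\mathcal{M}\to\mathcal{M}$, the renamed valuation is $v^{\sigma}(S)=v(\sigma^{-1}(S))$, where $\sigma(S)=\{\sigma(g):g\in S\}$. An allocation is a partition $(A_1,A_2)$ of all items of $\mathcal{M}$; it is envy-free if each agent weakly prefers her own bundle to the other agent's bundle. A valuation $v$ is additive if $v(S)=\sum_{g\in S}v(\{g\})$ for all $S$. *)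

theory Defs
  imports Complex_Main "HOL-Combinatorics.Permutations"
begin

definition renamed :: "('a set \<Rightarrow> real) \<Rightarrow> ('a \<Rightarrow> 'a) \<Rightarrow> 'a set \<Rightarrow> real" where
  "renamed v \<sigma> S = v (inv \<sigma> ` S)"

definition envy_free_exists :: "'a set \<Rightarrow> ('a set \<Rightarrow> real) \<Rightarrow> ('a set \<Rightarrow> real) \<Rightarrow> bool" where
  "envy_free_exists M w1 w2 \<longleftrightarrow>
     (\<exists>A1 A2. A1 \<union> A2 = M \<and> A1 \<inter> A2 = {} \<and> w1 A1 \<ge> w1 A2 \<and> w2 A2 \<ge> w2 A1)"

definition additive_on :: "'a set \<Rightarrow> ('a set \<Rightarrow> real) \<Rightarrow> bool" where
  "additive_on M v \<longleftrightarrow> (\<forall>S\<subseteq>M. v S = (\<Sum>g\<in>S. v {g}))"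

definition prob_EF :: "'a set \<Rightarrow> ('a set \<Rightarrow> real) \<Rightarrow> ('a set \<Rightarrow> real) \<Rightarrow> real" where
  "prob_EF M v1 v2 =
     real (card {(\<sigma>1, \<sigma>2). \<sigma>1 permutes M \<and> \<sigma>2 permutes M \<and>
                  envy_free_exists M (renamed v1 \<sigma>1) (renamed v2 \<sigma>2)})
     / real (card ({\<sigma>. \<sigma> permutes M} \<times> {\<sigma>. \<sigma> permutes M}))"

end

theory Submission
  imports Defs
begin

text \<open>
  Fix \<open>\<sigma>\<^sub>1\<close> and call a bundle \<open>S\<close> acceptable if agent 1 weakly prefers \<open>S\<close> to \<open>M - S\<close>;
  of every bundle and its complement at least one is acceptable. No envy-free allocation exists
  iff agent 2 strictly prefers every acceptable bundle to its complement. For such \<open>\<sigma>\<^sub>2\<close>,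
  acceptability is exactly complementary, so walking between two complementary halves of
  \<open>M\<close> by single exchanges gives a set \<open>U\<close> of size \<open>m/2 - 1\<close> and items \<open>x, y\<close> with \<open>U + x\<close>
  acceptable and \<open>U + y\<close> not. Composing \<open>\<sigma>\<^sub>2\<close> with \<open>m/2 + 1\<close> suitable transpositions of
  items outside \<open>U\<close> yields distinct permutations, because the transposition can be recovered
  from which sets \<open>U + w\<close> agent 2 then prefers. So at most a \<open>1/(m/2 + 1)\<close> fraction of the
  \<open>\<sigma>\<^sub>2\<close> are bad for each \<open>\<sigma>\<^sub>1\<close>.

  For tightness, let both agents value only a single item \<open>g\<close>: an envy-free allocation fails
  to exist exactly when \<open>\<sigma>\<^sub>1 g = \<sigma>\<^sub>2 g\<close>, which has probability \<open>1/m\<close>.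
\<close>

lemma transpose_image_exchange:
  assumes "a \<in> A" "b \<notin> A"
  shows "transpose a b ` A = insert b (A - {a})"
  using assms by (auto simp: in_transpose_image_iff transpose_def)

lemma inj_on_transpose_image:
  assumes x: "x \<in> P" and y: "y \<in> V - P" and "P \<subseteq> V"
  shows "inj_on (\<lambda>z. transpose (if z \<in> P - {x} then y else x) z ` P) V"
proof -
  have image: "transpose (if z \<in> P - {x} then y else x) z ` P =
      (if z \<notin> P then insert z (P - {x}) else if z = x then P else insert y (P - {z}))" for z
    using x y by (auto simp: transpose_image_exchange transpose_commute[of y])
  show ?thesis
    unfolding inj_on_def image using x y by (auto split: if_splits)
qed

lemma transpose_vimage_insert:
  "a \<notin> U \<Longrightarrow> b \<notin> U \<Longrightarrow> transpose a b -` insert w U = insert (transpose a b w) U"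
  by (auto simp: transpose_def split: if_splits)

lemma permutes_vimage_Diff:
  "\<sigma> permutes M \<Longrightarrow> \<sigma> -` (M - S) = M - \<sigma> -` S"
  by (auto simp: permutes_in_image)

lemma exists_exchange_boundary:
  assumes "finite S" "finite T" "card S = card T" "P S" "\<not> P T"
  shows "\<exists>U x y. U \<subseteq> S \<union> T \<and> x \<in> S \<union> T \<and> y \<in> S \<union> T \<and> x \<notin> U \<and> y \<notin> U \<and>
           card U + 1 = card S \<and> P (insert x U) \<and> \<not> P (insert y U)"
  using assms
proof (induction "card (S - T)" arbitrary: S)
  case 0
  then have "S \<subseteq> T" by simp
  then have "S = T" using 0 card_subset_eq[of T S] by simp
  with 0 show ?case by simp
next
  case (Suc n)
  have "card (T - S) = card (S - T)"
    using Suc.prems(1,2,3) by (simp add: card_Diff_subset_Int Int_commute)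
  then have "0 < card (S - T)" "0 < card (T - S)" using Suc.hyps(2) by simp_all
  then obtain x y where x: "x \<in> S - T" and y: "y \<in> T - S" unfolding card_gt_0_iff by blast
  define S' where "S' = insert y (S - {x})"
  have "finite S'" using \<open>finite S\<close> by (simp add: S'_def)
  have "card (S - {x}) + 1 = card S"
    using card.remove[OF \<open>finite S\<close>, of x] x by simp
  then have card_S': "card S' = card S"
    using y \<open>finite S\<close> by (simp add: S'_def)
  have "S' - T = (S - T) - {x}" using y by (auto simp: S'_def)
  then have "n = card (S' - T)" using x Suc.hyps(2) by simp
  show ?case
  proof (cases "P S'")
    case True
    have "card S' = card T" using card_S' Suc.prems(3) by simp
    from Suc.hyps(1)[OF \<open>n = card (S' - T)\<close> \<open>finite S'\<close> \<open>finite T\<close> this True \<open>\<not> P T\<close>]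
    obtain U x' y' where "U \<subseteq> S' \<union> T" "x' \<in> S' \<union> T" "y' \<in> S' \<union> T" "x' \<notin> U" "y' \<notin> U"
        "card U + 1 = card S'" "P (insert x' U)" "\<not> P (insert y' U)"
      by blast
    moreover have "S' \<union> T \<subseteq> S \<union> T" using y by (auto simp: S'_def)
    ultimately show ?thesis unfolding card_S' by blast
  next
    case False
    have "insert x (S - {x}) = S" "insert y (S - {x}) = S'" using x by (auto simp: S'_def)
    then have "P (insert x (S - {x}))" "\<not> P (insert y (S - {x}))" using \<open>P S\<close> False by simp_all
    moreover have "S - {x} \<subseteq> S \<union> T" "x \<in> S \<union> T" "y \<in> S \<union> T" "x \<notin> S - {x}" "y \<notin> S - {x}"
      using x y by auto
    ultimately show ?thesis using \<open>card (S - {x}) + 1 = card S\<close> by blast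
  qed
qed

lemma card_mult_le_card_permutations:
  assumes "finite M" and perm: "\<And>z. z \<in> V \<Longrightarrow> \<beta> z permutes M" and A: "A \<subseteq> {\<sigma>. \<sigma> permutes M}"
    and read: "\<And>z \<sigma>. z \<in> V \<Longrightarrow> \<sigma> \<in> A \<Longrightarrow> D (\<beta> z \<circ> \<sigma>) = h z" and "inj_on h V"
  shows "card V * card A \<le> fact (card M)"
proof -
  have "inj_on (\<lambda>(z, \<sigma>). \<beta> z \<circ> \<sigma>) (V \<times> A)"
  proof (rule inj_onI, clarsimp)
    fix z z' \<sigma> \<sigma>' assume z: "z \<in> V" "z' \<in> V" and \<sigma>: "\<sigma> \<in> A" "\<sigma>' \<in> A"
      and eq: "\<beta> z \<circ> \<sigma> = \<beta> z' \<circ> \<sigma>'"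
    have "h z = h z'" using read[OF z(1) \<sigma>(1)] read[OF z(2) \<sigma>(2)] eq by simp
    then have "z = z'" using \<open>inj_on h V\<close> z by (simp add: inj_on_def)
    moreover have "inj (\<beta> z)" using perm[OF z(1)] by (rule permutes_inj)
    ultimately show "z = z' \<and> \<sigma> = \<sigma>'" using eq by (auto simp: fun_eq_iff dest: injD)
  qed
  moreover have "(\<lambda>(z, \<sigma>). \<beta> z \<circ> \<sigma>) ` (V \<times> A) \<subseteq> {\<sigma>. \<sigma> permutes M}"
    using perm A by (auto intro: permutes_compose)
  ultimately have "card (V \<times> A) \<le> card {\<sigma>. \<sigma> permutes M}"
    using \<open>finite M\<close> by (intro card_inj_on_le) (auto simp: finite_permutations)
  then show ?thesis using \<open>finite M\<close> by (simp add: card_cartesian_product card_permutations)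
qed

lemma exists_boundary_of_complementary:
  assumes "finite M" "card M = 2 * k" and compl: "\<And>S. S \<subseteq> M \<Longrightarrow> F (M - S) \<longleftrightarrow> \<not> F S"
  obtains U x y where "U \<subseteq> M" "x \<in> M - U" "y \<in> M - U" "card U + 1 = k"
    "F (insert x U)" "\<not> F (insert y U)"
proof -
  obtain H where H: "H \<subseteq> M" "card H = k"
    using obtain_subset_with_card_n[of k M] \<open>card M = 2 * k\<close> by auto
  then have "card (M - H) = k"
    using assms(1,2) by (simp add: card_Diff_subset finite_subset)
  obtain S T where "S \<subseteq> M" "T \<subseteq> M" "card S = k" "card T = k" "F S" "\<not> F T"
  proof (cases "F H")
    case True
    then show ?thesis using that[of H "M - H"] H \<open>card (M - H) = k\<close> compl[OF \<open>H \<subseteq> M\<close>] by auto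
  next
    case False
    then show ?thesis using that[of "M - H" H] H \<open>card (M - H) = k\<close> compl[OF \<open>H \<subseteq> M\<close>] by auto
  qed
  moreover from this have "finite S" "finite T" using \<open>finite M\<close> finite_subset by blast+
  ultimately obtain U x y where "U \<subseteq> S \<union> T" "x \<in> S \<union> T" "y \<in> S \<union> T" "x \<notin> U" "y \<notin> U"
      "card U + 1 = k" "F (insert x U)" "\<not> F (insert y U)"
    using exists_exchange_boundary[of S T F] by auto
  with \<open>S \<subseteq> M\<close> \<open>T \<subseteq> M\<close> show ?thesis using that[of U x y] by auto
qed

lemma boundary_card_mult_le_fact:
  fixes v :: "'a set \<Rightarrow> 'b::linorder"
  assumes "finite M" "U \<subseteq> M" "x \<in> M - U" "y \<in> M - U" "F (insert x U)" "\<not> F (insert y U)"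
    and A: "A \<subseteq> {\<sigma>. \<sigma> permutes M}"
    and F_iff: "\<And>\<sigma> S. \<sigma> \<in> A \<Longrightarrow> S \<subseteq> M \<Longrightarrow> F S \<longleftrightarrow> v (\<sigma> -` (M - S)) < v (\<sigma> -` S)"
  shows "card (M - U) * card A \<le> fact (card M)"
proof -
  define V where "V = M - U"
  define P where "P = {w \<in> V. F (insert w U)}"
  define \<beta> where "\<beta> z = transpose (if z \<in> P - {x} then y else x) z" for z
  have "x \<in> P" "y \<in> V - P" "P \<subseteq> V"
    using assms(3-6) by (auto simp: P_def V_def)
  then have partner: "(if z \<in> P - {x} then y else x) \<in> V" for z
    by auto
  have \<beta>_permutes: "\<beta> z permutes M" if "z \<in> V" for z
    unfolding \<beta>_def using partner[of z] that by (intro permutes_swap_id) (auto simp: V_def)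
  have \<beta>_V: "\<beta> z w \<in> V \<longleftrightarrow> w \<in> V" if "z \<in> V" for z w
  proof -
    have "transpose (if z \<in> P - {x} then y else x) z ` V = V" using partner[of z] that by simp
    with in_transpose_image_iff show ?thesis unfolding \<beta>_def by metis
  qed
  have \<beta>_insert: "\<beta> z -` insert w U = insert (\<beta> z w) U" if "z \<in> V" for z w
    unfolding \<beta>_def using partner[of z] that by (intro transpose_vimage_insert) (auto simp: V_def)
  text \<open>From \<open>\<beta> z \<circ> \<sigma>\<close> with \<open>\<sigma> \<in> A\<close> one can read off \<open>\<beta> z ` P\<close>, and hence \<open>z\<close>.\<close>
  define D where "D \<tau> = {w \<in> V. v (\<tau> -` (M - insert w U)) < v (\<tau> -` insert w U)}" for \<tau>
  have read: "D (\<beta> z \<circ> \<sigma>) = \<beta> z ` P" if "z \<in> V" "\<sigma> \<in> A" for z \<sigma>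
  proof -
    have "w \<in> D (\<beta> z \<circ> \<sigma>) \<longleftrightarrow> w \<in> V \<and> F (insert (\<beta> z w) U)" for w
    proof -
      have "\<beta> z -` (M - insert w U) = M - insert (\<beta> z w) U"
        using permutes_vimage_Diff[OF \<beta>_permutes[OF \<open>z \<in> V\<close>]] \<beta>_insert[OF \<open>z \<in> V\<close>] by simp
      moreover have "w \<in> V \<Longrightarrow> insert (\<beta> z w) U \<subseteq> M"
        using \<beta>_V[OF \<open>z \<in> V\<close>] \<open>U \<subseteq> M\<close> by (auto simp: V_def)
      ultimately show ?thesis
        using F_iff[OF \<open>\<sigma> \<in> A\<close>] \<beta>_insert[OF \<open>z \<in> V\<close>]
        by (auto simp: D_def vimage_comp[symmetric])
    qed
    moreover have "w \<in> \<beta> z ` P \<longleftrightarrow> \<beta> z w \<in> P" for w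
      unfolding \<beta>_def by (rule in_transpose_image_iff)
    ultimately show ?thesis
      using \<beta>_V[OF \<open>z \<in> V\<close>] by (intro set_eqI) (simp add: P_def)
  qed
  have "inj_on (\<lambda>z. \<beta> z ` P) V"
    unfolding \<beta>_def by (rule inj_on_transpose_image[OF \<open>x \<in> P\<close> \<open>y \<in> V - P\<close> \<open>P \<subseteq> V\<close>])
  from card_mult_le_card_permutations[OF \<open>finite M\<close> \<beta>_permutes A read this]
  show ?thesis unfolding V_def .
qed

lemma card_permutations_strictly_preferring_le:
  fixes F :: "'a set \<Rightarrow> bool" and v :: "'a set \<Rightarrow> 'b::linorder"
  assumes "finite M" "card M = 2 * k" and total: "\<And>S. S \<subseteq> M \<Longrightarrow> F S \<or> F (M - S)"
  shows "(k + 1) * card {\<sigma>. \<sigma> permutes M \<and> (\<forall>S\<subseteq>M. F S \<longrightarrow> v (\<sigma> -` (M - S)) < v (\<sigma> -` S))}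
           \<le> fact (2 * k)"
    (is "_ * card ?A \<le> _")
proof (cases "?A = {}")
  case False
  then obtain \<sigma>\<^sub>0 where "\<sigma>\<^sub>0 \<in> ?A" by blast
  have F_iff: "F S \<longleftrightarrow> v (\<sigma> -` (M - S)) < v (\<sigma> -` S)" if "\<sigma> \<in> ?A" "S \<subseteq> M" for \<sigma> S
  proof
    have pref: "v (\<sigma> -` (M - S')) < v (\<sigma> -` S')" if "S' \<subseteq> M" "F S'" for S'
      using \<open>\<sigma> \<in> ?A\<close> that by blast
    show "F S \<Longrightarrow> v (\<sigma> -` (M - S)) < v (\<sigma> -` S)" using pref \<open>S \<subseteq> M\<close> .
    assume less: "v (\<sigma> -` (M - S)) < v (\<sigma> -` S)"
    show "F S"
    proof (rule ccontr)
      assume "\<not> F S"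
      then have "v (\<sigma> -` (M - (M - S))) < v (\<sigma> -` (M - S))"
        using pref[of "M - S"] total[OF \<open>S \<subseteq> M\<close>] by blast
      with less \<open>S \<subseteq> M\<close> show False by (simp add: double_diff)
    qed
  qed
  have "F (M - S) \<longleftrightarrow> \<not> F S" if "S \<subseteq> M" for S
    using F_iff[OF \<open>\<sigma>\<^sub>0 \<in> ?A\<close> that] F_iff[OF \<open>\<sigma>\<^sub>0 \<in> ?A\<close>, of "M - S"] total[OF that] that
    by (auto simp: double_diff)
  then obtain U x y where U: "U \<subseteq> M" "x \<in> M - U" "y \<in> M - U" "card U + 1 = k"
      and "F (insert x U)" "\<not> F (insert y U)"
    using exists_boundary_of_complementary[OF \<open>finite M\<close> \<open>card M = 2 * k\<close>] by metis
  have "card (M - U) = k + 1"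
    using U \<open>finite M\<close> \<open>card M = 2 * k\<close> by (simp add: card_Diff_subset finite_subset)
  moreover have "?A \<subseteq> {\<sigma>. \<sigma> permutes M}" by blast
  note boundary_card_mult_le_fact[OF \<open>finite M\<close> U(1-3) \<open>F (insert x U)\<close> \<open>\<not> F (insert y U)\<close> this F_iff]
  ultimately show ?thesis using \<open>card M = 2 * k\<close> by simp
qed (simp only: card.empty mult_0_right zero_le)

lemma renamed_eq_vimage: "\<sigma> permutes M \<Longrightarrow> renamed v \<sigma> S = v (\<sigma> -` S)"
  by (simp add: renamed_def bij_vimage_eq_inv_image permutes_bij)

lemma envy_free_exists_iff_bundle:
  "envy_free_exists M w1 w2 \<longleftrightarrow> (\<exists>S\<subseteq>M. w1 (M - S) \<le> w1 S \<and> w2 S \<le> w2 (M - S))"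
proof
  assume "envy_free_exists M w1 w2"
  then obtain A1 A2 where "A1 \<union> A2 = M" "A1 \<inter> A2 = {}" "w1 A2 \<le> w1 A1" "w2 A1 \<le> w2 A2"
    unfolding envy_free_exists_def by blast
  moreover from this have "A2 = M - A1" by blast
  ultimately show "\<exists>S\<subseteq>M. w1 (M - S) \<le> w1 S \<and> w2 S \<le> w2 (M - S)"
    by (intro exI[of _ A1]) auto
next
  assume "\<exists>S\<subseteq>M. w1 (M - S) \<le> w1 S \<and> w2 S \<le> w2 (M - S)"
  then obtain S where "S \<subseteq> M" "w1 (M - S) \<le> w1 S" "w2 S \<le> w2 (M - S)" by blast
  then show "envy_free_exists M w1 w2"
    unfolding envy_free_exists_def by (intro exI[of _ S] exI[of _ "M - S"]) auto
qed

lemma one_minus_prob_EF: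
  assumes "finite M"
  shows "1 - prob_EF M v1 v2 =
    (\<Sum>\<sigma>\<^sub>1 | \<sigma>\<^sub>1 permutes M. real (card {\<sigma>\<^sub>2. \<sigma>\<^sub>2 permutes M \<and>
        \<not> envy_free_exists M (renamed v1 \<sigma>\<^sub>1) (renamed v2 \<sigma>\<^sub>2)})) / (fact (card M))\<^sup>2"
proof -
  let ?P = "{\<sigma>. \<sigma> permutes M}"
  define EF where "EF \<sigma>\<^sub>1 \<sigma>\<^sub>2 \<longleftrightarrow> envy_free_exists M (renamed v1 \<sigma>\<^sub>1) (renamed v2 \<sigma>\<^sub>2)" for \<sigma>\<^sub>1 \<sigma>\<^sub>2
  define Good where "Good = {(\<sigma>\<^sub>1, \<sigma>\<^sub>2). \<sigma>\<^sub>1 permutes M \<and> \<sigma>\<^sub>2 permutes M \<and> EF \<sigma>\<^sub>1 \<sigma>\<^sub>2}"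
  have "finite ?P" "card ?P = fact (card M)"
    using assms by (simp_all add: finite_permutations card_permutations)
  have "Good \<subseteq> ?P \<times> ?P" by (auto simp: Good_def)
  then have "finite Good" using \<open>finite ?P\<close> finite_subset by blast
  have "?P \<times> ?P - Good = Sigma ?P (\<lambda>\<sigma>\<^sub>1. {\<sigma>\<^sub>2. \<sigma>\<^sub>2 permutes M \<and> \<not> EF \<sigma>\<^sub>1 \<sigma>\<^sub>2})"
    by (auto simp: Good_def)
  then have "card (?P \<times> ?P) - card Good = (\<Sum>\<sigma>\<^sub>1\<in>?P. card {\<sigma>\<^sub>2. \<sigma>\<^sub>2 permutes M \<and> \<not> EF \<sigma>\<^sub>1 \<sigma>\<^sub>2})"
    using card_Diff_subset[OF \<open>finite Good\<close> \<open>Good \<subseteq> ?P \<times> ?P\<close>] card_SigmaI[OF \<open>finite ?P\<close>]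
    by (simp add: \<open>finite ?P\<close> assms finite_permutations)
  moreover have "card Good \<le> card (?P \<times> ?P)"
    using \<open>finite ?P\<close> \<open>Good \<subseteq> ?P \<times> ?P\<close> by (intro card_mono) simp_all
  ultimately have diff: "real (card (?P \<times> ?P)) - real (card Good) =
      (\<Sum>\<sigma>\<^sub>1\<in>?P. real (card {\<sigma>\<^sub>2. \<sigma>\<^sub>2 permutes M \<and> \<not> EF \<sigma>\<^sub>1 \<sigma>\<^sub>2}))"
    by (simp flip: of_nat_diff)
  have card_PP: "real (card (?P \<times> ?P)) = (fact (card M))\<^sup>2"
    using \<open>card ?P = fact (card M)\<close> by (simp add: card_cartesian_product power2_eq_square)
  have "prob_EF M v1 v2 = real (card Good) / real (card (?P \<times> ?P))"
    by (simp add: prob_EF_def Good_def EF_def)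
  moreover have "real (card (?P \<times> ?P)) \<noteq> 0"
    unfolding card_PP by simp
  ultimately have "1 - prob_EF M v1 v2 = (real (card (?P \<times> ?P)) - real (card Good)) / real (card (?P \<times> ?P))"
    by (simp add: diff_divide_distrib)
  also have "\<dots> = (\<Sum>\<sigma>\<^sub>1 | \<sigma>\<^sub>1 permutes M. real (card {\<sigma>\<^sub>2. \<sigma>\<^sub>2 permutes M \<and> \<not> EF \<sigma>\<^sub>1 \<sigma>\<^sub>2})) /
      (fact (card M))\<^sup>2"
    unfolding diff by (simp only: card_PP)
  finally show ?thesis unfolding EF_def .
qed

lemma prob_EF_ge:
  assumes "finite M" "even (card M)"
  shows "1 - 1 / (real (card M) / 2 + 1) \<le> prob_EF M v1 v2"
proof -
  obtain k where k: "card M = 2 * k" using \<open>even (card M)\<close> by blast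
  have fibre_le: "real (card {\<sigma>\<^sub>2. \<sigma>\<^sub>2 permutes M \<and> \<not> envy_free_exists M (renamed v1 \<sigma>\<^sub>1) (renamed v2 \<sigma>\<^sub>2)})
          \<le> fact (card M) / real (k + 1)" for \<sigma>\<^sub>1
  proof -
    define F where "F S \<longleftrightarrow> renamed v1 \<sigma>\<^sub>1 (M - S) \<le> renamed v1 \<sigma>\<^sub>1 S" for S
    have "\<not> envy_free_exists M (renamed v1 \<sigma>\<^sub>1) (renamed v2 \<sigma>\<^sub>2) \<longleftrightarrow>
        (\<forall>S\<subseteq>M. F S \<longrightarrow> v2 (\<sigma>\<^sub>2 -` (M - S)) < v2 (\<sigma>\<^sub>2 -` S))" if "\<sigma>\<^sub>2 permutes M" for \<sigma>\<^sub>2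
      unfolding envy_free_exists_iff_bundle renamed_eq_vimage[OF that] F_def by (auto simp: not_le)
    then have fibre_eq: "{\<sigma>\<^sub>2. \<sigma>\<^sub>2 permutes M \<and> \<not> envy_free_exists M (renamed v1 \<sigma>\<^sub>1) (renamed v2 \<sigma>\<^sub>2)} =
        {\<sigma>\<^sub>2. \<sigma>\<^sub>2 permutes M \<and> (\<forall>S\<subseteq>M. F S \<longrightarrow> v2 (\<sigma>\<^sub>2 -` (M - S)) < v2 (\<sigma>\<^sub>2 -` S))}"
      by blast
    have total: "F S \<or> F (M - S)" if "S \<subseteq> M" for S
      using that by (metis F_def double_diff order_refl nle_le)
    have "(k + 1) * card {\<sigma>\<^sub>2. \<sigma>\<^sub>2 permutes M \<and> \<not> envy_free_exists M (renamed v1 \<sigma>\<^sub>1) (renamed v2 \<sigma>\<^sub>2)}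
        \<le> fact (card M)"
      using card_permutations_strictly_preferring_le[where F = F and v = v2, OF \<open>finite M\<close> k total] k
      unfolding fibre_eq by simp
    from of_nat_mono[where 'a = real, OF this] show ?thesis by (simp add: pos_le_divide_eq algebra_simps)
  qed
  have "1 - prob_EF M v1 v2 \<le> (\<Sum>\<sigma>\<^sub>1 | \<sigma>\<^sub>1 permutes M. fact (card M) / real (k + 1)) / (fact (card M))\<^sup>2"
    unfolding one_minus_prob_EF[OF \<open>finite M\<close>] by (intro divide_right_mono sum_mono fibre_le) simp
  also have "\<dots> = 1 / real (k + 1)"
    using \<open>finite M\<close> by (simp add: card_permutations power2_eq_square)
  finally show ?thesis using k by (simp add: add.commute)
qed

lemma card_permutations_with_value:
  assumes "finite M" "a \<in> M" "b \<in> M"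
  shows "card {\<sigma>. \<sigma> permutes M \<and> \<sigma> a = b} = fact (card M - 1)"
proof -
  have "{\<sigma>. \<sigma> permutes M \<and> \<sigma> a = b} = (\<lambda>p. transpose a b \<circ> p) ` {p. p permutes M - {a}}"
  proof (intro equalityI subsetI)
    fix \<sigma> assume "\<sigma> \<in> {\<sigma>. \<sigma> permutes M \<and> \<sigma> a = b}"
    then have "\<sigma> permutes insert a (M - {a})" "\<sigma> a = b" using \<open>a \<in> M\<close> by (simp_all add: insert_absorb)
    then have "transpose a b \<circ> \<sigma> permutes M - {a}" using permutes_insert_lemma[of \<sigma> a] by simp
    moreover have "\<sigma> = transpose a b \<circ> (transpose a b \<circ> \<sigma>)" by (simp flip: comp_assoc)
    ultimately show "\<sigma> \<in> (\<lambda>p. transpose a b \<circ> p) ` {p. p permutes M - {a}}"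
      by (intro image_eqI[where x = "transpose a b \<circ> \<sigma>"]) simp_all
  next
    fix \<sigma> assume "\<sigma> \<in> (\<lambda>p. transpose a b \<circ> p) ` {p. p permutes M - {a}}"
    then obtain p where \<sigma>: "\<sigma> = transpose a b \<circ> p" and "p \<in> {p. p permutes M - {a}}"
      by (rule imageE)
    then have p: "p permutes M - {a}" by simp
    have "p permutes M" using permutes_subset[OF p Diff_subset] .
    moreover have "p a = a" using permutes_not_in[OF p] by simp
    ultimately show "\<sigma> \<in> {\<sigma>. \<sigma> permutes M \<and> \<sigma> a = b}"
      unfolding \<sigma> using permutes_compose permutes_swap_id[OF assms(2,3)] by simp
  qed
  moreover have "inj_on (\<lambda>p. transpose a b \<circ> p) {p. p permutes M - {a}}"
  proof (rule inj_onI)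
    fix p q assume "transpose a b \<circ> p = transpose a b \<circ> q"
    then have "transpose a b \<circ> (transpose a b \<circ> p) = transpose a b \<circ> (transpose a b \<circ> q)" by simp
    then show "p = q" by (simp flip: comp_assoc)
  qed
  ultimately have "card {\<sigma>. \<sigma> permutes M \<and> \<sigma> a = b} = card {p. p permutes M - {a}}"
    by (simp add: card_image)
  also have "\<dots> = fact (card M - 1)"
    using assms by (simp add: card_permutations)
  finally show ?thesis .
qed

lemma exists_additive_one_minus_prob_EF_eq:
  assumes "finite M" "2 \<le> card M"
  shows "\<exists>v1 v2. additive_on M v1 \<and> additive_on M v2 \<and> 1 - prob_EF M v1 v2 = 1 / real (card M)"
proof -
  obtain g where "g \<in> M" using assms by (metis card.empty ex_in_conv not_numeral_le_zero)
  define v :: "'a set \<Rightarrow> real" where "v S = (if g \<in> S then 1 else 0)" for S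
  have "additive_on M v"
    unfolding additive_on_def v_def using \<open>finite M\<close> by (auto dest: finite_subset)
  have no_EF_iff: "\<not> envy_free_exists M (renamed v \<sigma>\<^sub>1) (renamed v \<sigma>\<^sub>2) \<longleftrightarrow> \<sigma>\<^sub>2 g = \<sigma>\<^sub>1 g"
    if "\<sigma>\<^sub>1 permutes M" "\<sigma>\<^sub>2 permutes M" for \<sigma>\<^sub>1 \<sigma>\<^sub>2
  proof -
    have "\<sigma>\<^sub>1 g \<in> M" "\<sigma>\<^sub>2 g \<in> M" using that \<open>g \<in> M\<close> by (simp_all add: permutes_in_image)
    have "envy_free_exists M (renamed v \<sigma>\<^sub>1) (renamed v \<sigma>\<^sub>2) \<longleftrightarrow> (\<exists>S\<subseteq>M. \<sigma>\<^sub>1 g \<in> S \<and> \<sigma>\<^sub>2 g \<notin> S)"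
      unfolding envy_free_exists_iff_bundle renamed_eq_vimage[OF that(1)] renamed_eq_vimage[OF that(2)]
      using \<open>\<sigma>\<^sub>1 g \<in> M\<close> \<open>\<sigma>\<^sub>2 g \<in> M\<close> by (simp add: v_def) blast
    also have "\<dots> \<longleftrightarrow> \<sigma>\<^sub>2 g \<noteq> \<sigma>\<^sub>1 g"
      using \<open>\<sigma>\<^sub>1 g \<in> M\<close> by (metis empty_subsetI insert_subset singletonD singletonI)
    finally show ?thesis by blast
  qed
  have "(\<Sum>\<sigma>\<^sub>1 | \<sigma>\<^sub>1 permutes M. real (card {\<sigma>\<^sub>2. \<sigma>\<^sub>2 permutes M \<and> \<not> envy_free_exists M (renamed v \<sigma>\<^sub>1) (renamed v \<sigma>\<^sub>2)}))
      = (\<Sum>\<sigma>\<^sub>1 | \<sigma>\<^sub>1 permutes M. fact (card M - 1))"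
  proof (rule sum.cong)
    fix \<sigma>\<^sub>1 assume "\<sigma>\<^sub>1 \<in> {\<sigma>. \<sigma> permutes M}"
    then have "\<sigma>\<^sub>1 permutes M" "\<sigma>\<^sub>1 g \<in> M" using \<open>g \<in> M\<close> by (simp_all add: permutes_in_image)
    then have "{\<sigma>\<^sub>2. \<sigma>\<^sub>2 permutes M \<and> \<not> envy_free_exists M (renamed v \<sigma>\<^sub>1) (renamed v \<sigma>\<^sub>2)}
        = {\<sigma>\<^sub>2. \<sigma>\<^sub>2 permutes M \<and> \<sigma>\<^sub>2 g = \<sigma>\<^sub>1 g}"
      using no_EF_iff by blast
    then show "real (card {\<sigma>\<^sub>2. \<sigma>\<^sub>2 permutes M \<and> \<not> envy_free_exists M (renamed v \<sigma>\<^sub>1) (renamed v \<sigma>\<^sub>2)})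
        = fact (card M - 1)"
      using card_permutations_with_value[OF \<open>finite M\<close> \<open>g \<in> M\<close> \<open>\<sigma>\<^sub>1 g \<in> M\<close>] by simp
  qed simp
  also have "\<dots> = fact (card M) * fact (card M - 1)"
    using \<open>finite M\<close> by (simp add: card_permutations)
  finally have "1 - prob_EF M v v = fact (card M - 1) / fact (card M)"
    by (simp add: one_minus_prob_EF[OF \<open>finite M\<close>] power2_eq_square)
  also have "\<dots> = 1 / real (card M)"
    using \<open>2 \<le> card M\<close> by (simp add: fact_reduce[of "card M"])
  finally show ?thesis using \<open>additive_on M v\<close> by blast
qed

theorem theorem3p5:
  shows "(\<forall>(M :: 'a set) v1 v2. finite M \<and> even (card M) \<longrightarrow>
            prob_EF M v1 v2 \<ge> 1 - 1 / (real (card M) / 2 + 1))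
       \<and> (\<forall>M :: 'a set. finite M \<and> card M \<ge> 2 \<longrightarrow>
            (\<exists>v1 v2. additive_on M v1 \<and> additive_on M v2 \<and>
                     1 - prob_EF M v1 v2 = 1 / real (card M)))"
  using prob_EF_ge exists_additive_one_minus_prob_EF_eq by blast

end
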